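(* Let $n\in\mathbb{N}$, $R_+>0$, $\delta\in(0,1)$, $\varepsilon:=\delta^2R_+^{-1}$ and $a,b>0$. On $\mathbb{R}^{2+n}$ with coordinates $(t_1,t_2,x)$, let $r=|x|$, $\tau=\sqrt{t_1^2+t_2^2}$, $u=\frac12(\tau-r)$, $v=\frac12(\tau+r)$, $f=-uv=\frac14(|x|^2-t_1^2-t_2^2)$, $\xi:=(1+\varepsilon u)(1-\varepsilon v)=1-\varepsilon r+\varepsilon^2f$, and \[ \zeta_{a,b;\varepsilon}:=\left\{\frac{f}{(1+\varepsilon u)(1-\varepsilon v)}\exp\left[\frac{2bf^{1/2}}{(1-\varepsilon u)^{1/2}(1+\varepsilon v)^{1/2}}\right]\right\}^{2a}. \] Let $x\in\mathbb{R}^n$ with $|x|\le R_+$, and $t,t_1,t_2\in\mathbb{R}$ with $t^2<t_1^2$ and $t_1^2+t_2^2<|x|^2$. Then \[ \frac{f}{\xi}(t,t_2,x)>\frac{f}{\xi}(t_1,t_2,x)\qquad\text{and}\qquad(\zeta_{a,b;\varepsilon}f)(t,t_2,x)>(\zeta_{a,b;\varepsilon}f)(t_1,t_2,x). \] *)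

theory Defs
  imports "HOL-Analysis.Analysis"
begin

definition rr :: "real ^ 'n \<Rightarrow> real" where
  "rr x = norm x"

definition tau :: "real \<Rightarrow> real \<Rightarrow> real" where
  "tau t1 t2 = sqrt (t1\<^sup>2 + t2\<^sup>2)"

definition uu :: "real \<Rightarrow> real \<Rightarrow> real ^ 'n \<Rightarrow> real" where
  "uu t1 t2 x = (tau t1 t2 - rr x) / 2"

definition vv :: "real \<Rightarrow> real \<Rightarrow> real ^ 'n \<Rightarrow> real" where
  "vv t1 t2 x = (tau t1 t2 + rr x) / 2"

definition ff :: "real \<Rightarrow> real \<Rightarrow> real ^ 'n \<Rightarrow> real" where
  "ff t1 t2 x = - (uu t1 t2 x * vv t1 t2 x)"

definition xi :: "real \<Rightarrow> real \<Rightarrow> real \<Rightarrow> real ^ 'n \<Rightarrow> real" where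
  "xi eps t1 t2 x = (1 + eps * uu t1 t2 x) * (1 - eps * vv t1 t2 x)"

definition zeta :: "real \<Rightarrow> real \<Rightarrow> real \<Rightarrow> real \<Rightarrow> real \<Rightarrow> real ^ 'n \<Rightarrow> real" where
  "zeta a b eps t1 t2 x =
     (ff t1 t2 x / ((1 + eps * uu t1 t2 x) * (1 - eps * vv t1 t2 x))
      * exp (2 * b * sqrt (ff t1 t2 x)
             / (sqrt (1 - eps * uu t1 t2 x) * sqrt (1 + eps * vv t1 t2 x)))) powr (2 * a)"

end

theory Submission
  imports Defs
begin

text \<open>For fixed \<open>x\<close>, with \<open>r = |x|\<close>, the function \<open>f = (r\<^sup>2 - t\<^sub>1\<^sup>2 - t\<^sub>2\<^sup>2)/4\<close> strictly
  decreases when \<open>t\<^sub>1\<^sup>2\<close> grows. Both quantities of the theorem are strictly increasing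
  functions of \<open>f\<close> alone on \<open>f > 0\<close>: \<open>\<xi> = (1 - \<epsilon> r) + \<epsilon>\<^sup>2 f\<close> with \<open>1 - \<epsilon> r \<ge> 1 - \<delta>\<^sup>2 > 0\<close>,
  so \<open>f/\<xi>\<close> is a Moebius map increasing in \<open>f\<close>, and likewise
  \<open>(1 - \<epsilon> u)(1 + \<epsilon> v) = (1 + \<epsilon> r) + \<epsilon>\<^sup>2 f\<close> in the exponent of \<open>\<zeta>\<close>.\<close>

lemma ff_eq_sq_diff: "ff t1 t2 x = ((norm x)\<^sup>2 - (t1\<^sup>2 + t2\<^sup>2)) / 4"
proof -
  have "(sqrt (t1\<^sup>2 + t2\<^sup>2))\<^sup>2 = t1\<^sup>2 + t2\<^sup>2" by simp
  then show ?thesis unfolding ff_def uu_def vv_def tau_def rr_def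
    by (simp add: field_simps power2_eq_square)
qed

lemma xi_eq_ff: "xi eps t1 t2 x = 1 - eps * norm x + eps\<^sup>2 * ff t1 t2 x"
  unfolding xi_def ff_def uu_def vv_def rr_def by (simp add: field_simps power2_eq_square)

lemma dual_xi_eq_ff:
  "(1 - eps * uu t1 t2 x) * (1 + eps * vv t1 t2 x) = 1 + eps * norm x + eps\<^sup>2 * ff t1 t2 x"
  unfolding ff_def uu_def vv_def rr_def by (simp add: field_simps power2_eq_square)

lemma divide_affine_strict_mono:
  fixes c e F1 F :: real
  assumes "0 < c" "0 \<le> e" "0 \<le> F1" "F1 < F"
  shows "F1 / (c + e * F1) < F / (c + e * F)"
proof -
  have "0 < c + e * F1" "0 < c + e * F" using assms by (simp_all add: add_pos_nonneg)
  moreover have "F1 * (c + e * F) < F * (c + e * F1)"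
    using assms by (simp add: algebra_simps)
  ultimately show ?thesis by (simp add: divide_simps)
qed

definition zeta_profile :: "real \<Rightarrow> real \<Rightarrow> real \<Rightarrow> real \<Rightarrow> real \<Rightarrow> real \<Rightarrow> real" where
  "zeta_profile a b c d e F = (F / (c + e * F) * exp (2 * b * sqrt (F / (d + e * F)))) powr (2 * a)"

text \<open>No sign conditions are needed: on \<^typ>\<open>real\<close>, \<^const>\<open>sqrt\<close> is multiplicative everywhere.\<close>

lemma zeta_eq_profile:
  "zeta a b eps t1 t2 x
     = zeta_profile a b (1 - eps * norm x) (1 + eps * norm x) (eps\<^sup>2) (ff t1 t2 x)"
proof -
  have "sqrt (ff t1 t2 x) / (sqrt (1 - eps * uu t1 t2 x) * sqrt (1 + eps * vv t1 t2 x))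
      = sqrt (ff t1 t2 x / (1 + eps * norm x + eps\<^sup>2 * ff t1 t2 x))"
    by (simp add: real_sqrt_mult[symmetric] real_sqrt_divide dual_xi_eq_ff)
  then show ?thesis
    using xi_eq_ff[of eps t1 t2 x, unfolded xi_def]
    unfolding zeta_def zeta_profile_def by (metis times_divide_eq_right)
qed

lemma zeta_profile_strict_mono:
  assumes "0 < a" "0 \<le> b" "0 < c" "0 < d" "0 \<le> e" "0 \<le> F1" "F1 < F"
  shows "zeta_profile a b c d e F1 < zeta_profile a b c d e F"
proof -
  have frac: "F1 / (c + e * F1) < F / (c + e * F)"
    using divide_affine_strict_mono assms by blast
  have "F1 / (d + e * F1) < F / (d + e * F)"
    using divide_affine_strict_mono assms by blast
  then have exp_le: "exp (2 * b * sqrt (F1 / (d + e * F1))) \<le> exp (2 * b * sqrt (F / (d + e * F)))"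
    using \<open>0 \<le> b\<close> by (simp add: mult_left_mono)
  have frac_nonneg: "0 \<le> F1 / (c + e * F1)"
    using assms by (simp add: add_pos_nonneg)
  have "F1 / (c + e * F1) * exp (2 * b * sqrt (F1 / (d + e * F1)))
      < F / (c + e * F) * exp (2 * b * sqrt (F / (d + e * F)))"
    using frac exp_le frac_nonneg by (intro mult_less_le_imp_less) auto
  then show ?thesis
    unfolding zeta_profile_def using \<open>0 < a\<close> frac_nonneg
    by (intro powr_less_mono2 mult_nonneg_nonneg) auto
qed

lemma zeta_profile_mult_strict_mono:
  assumes "0 < a" "0 \<le> b" "0 < c" "0 < d" "0 \<le> e" "0 \<le> F1" "F1 < F"
  shows "zeta_profile a b c d e F1 * F1 < zeta_profile a b c d e F * F"
proof (rule mult_strict_mono)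
  show "zeta_profile a b c d e F1 < zeta_profile a b c d e F"
    using assms by (rule zeta_profile_strict_mono)
  then show "0 < zeta_profile a b c d e F"
    unfolding zeta_profile_def by (smt (verit) powr_ge_zero)
qed (use assms in auto)

theorem lemma4p4:
  fixes x :: "real ^ 'n" and Rp \<delta> eps a b t t1 t2 :: real
  assumes "Rp > 0" and "0 < \<delta>" and "\<delta> < 1" and "eps = \<delta>\<^sup>2 / Rp"
    and "a > 0" and "b > 0"
    and "norm x \<le> Rp"
    and "t\<^sup>2 < t1\<^sup>2" and "t1\<^sup>2 + t2\<^sup>2 < (norm x)\<^sup>2"
  shows "ff t t2 x / xi eps t t2 x > ff t1 t2 x / xi eps t1 t2 x
    \<and> zeta a b eps t t2 x * ff t t2 x > zeta a b eps t1 t2 x * ff t1 t2 x"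
proof -
  have eps_nonneg: "0 \<le> eps" using assms(1,4) by simp
  have "eps * norm x \<le> eps * Rp" using eps_nonneg assms(7) by (simp add: mult_left_mono)
  also have "\<dots> = \<delta>\<^sup>2" using assms(1,4) by simp
  also have "\<dots> < 1" using assms(2,3) by (simp add: power_less_one_iff)
  finally have "0 < 1 - eps * norm x" "0 < 1 + eps * norm x"
    using eps_nonneg by (auto intro: add_pos_nonneg)
  moreover have "0 \<le> ff t1 t2 x" "ff t1 t2 x < ff t t2 x"
    using assms(8,9) by (simp_all add: ff_eq_sq_diff)
  ultimately show ?thesis
    using assms(5,6) divide_affine_strict_mono[of "1 - eps * norm x" "eps\<^sup>2"]
      zeta_profile_mult_strict_mono[of a b "1 - eps * norm x" "1 + eps * norm x" "eps\<^sup>2"]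
    by (simp add: xi_eq_ff zeta_eq_profile)
qed

end
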